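(* Let $(\lambda_i)_{i\ge1}$ and $(\mu_i)_{i\ge1}$ be elements of a commutative ring. Let $k\ge0$ and $0\le\delta\le k$ with $k-\delta$ even, and put $j=(k-\delta)/2$ and $M=(k+\delta)/2$. Then $$\sum_{P\in\mathcal{D}(k,0,\delta)}\mathrm{wt}(P)=\Big(\prod_{i=1}^{\delta}\lambda_i\Big)\sum_{\substack{m_1\le m_2\le\cdots\le m_j\le M\\ m_i\ge i\ (1\le i\le j)}}\ \prod_{i=1}^{j}\lambda_{m_i-i+1}\,\mu_{m_i-i+1},$$ where the sum on the right is over integer tuples $(m_1,\dots,m_j)$ and equals $1$ when $j=0$. Equivalently, the right-hand side is the nested sum $$\prod_{i=1}^{\delta}\lambda_i\sum_{m_j=j}^{M}\lambda_{m_j-j+1}\mu_{m_j-j+1}\Big[\cdots\Big[\sum_{m_2=2}^{m_3}\lambda_{m_2-1}\mu_{m_2-1}\Big[\sum_{m_1=1}^{m_2}\lambda_{m_1}\mu_{m_1}\Big]\Big]\cdots\Big].$$ In particular for $\delta=0$ (so $k$ even, $j=M=k/2$) the sum of weights of all paths in $\mathcal{D}(k,0,0)$ is the nested sum with all upper bounds $k/2$ and no prefactor.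
   Context: $\mathcal{D}(k,\delta_1,\delta_2)$ is the set of lattice paths of $k$ steps, each step $U=(1,1)$ or $D=(1,-1)$, from $(0,\delta_1)$ to $(k,\delta_2)$, never going below the $x$-axis. The weight $\mathrm{wt}(P)$ of a path is the product over its steps of $\lambda_i$ for each up step from height $i-1$ to height $i$ and $\mu_i$ for each down step from height $i$ to height $i-1$. *)

theory Defs
  imports Main
begin

text \<open>A lattice path is a list of steps: True = up step U=(1,1), False = down step D=(1,-1).
  path_ok h s e: starting at height h, following s never goes below the x-axis and ends at height e.\<close>
fun path_ok :: "nat \<Rightarrow> bool list \<Rightarrow> nat \<Rightarrow> bool" where
  "path_ok h [] e = (h = e)"
| "path_ok h (True # s) e = path_ok (Suc h) s e"
| "path_ok h (False # s) e = (0 < h \<and> path_ok (h - 1) s e)"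

definition Dpaths :: "nat \<Rightarrow> nat \<Rightarrow> nat \<Rightarrow> bool list set" where
  "Dpaths k d1 d2 = {s. length s = k \<and> path_ok d1 s d2}"

text \<open>Weight of a path started at height h: up step from i-1 to i contributes lam i,
  down step from i to i-1 contributes mu i.\<close>
fun pwt :: "(nat \<Rightarrow> 'a::comm_ring_1) \<Rightarrow> (nat \<Rightarrow> 'a) \<Rightarrow> nat \<Rightarrow> bool list \<Rightarrow> 'a" where
  "pwt lam mu h [] = 1"
| "pwt lam mu h (True # s) = lam (Suc h) * pwt lam mu (Suc h) s"
| "pwt lam mu h (False # s) = mu h * pwt lam mu (h - 1) s"

end

theory Submission
  imports Defs
begin

text \<open>Let F(k, d) be the weight sum of the paths of length k from height 0 to height d, and
  C(j, M) the weight sum of the chains of length j bounded by M.  Splitting off the last step gives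
  F(k+1, d) = lam d * F(k, d-1) + mu (d+1) * F(k, d+1); splitting off whether the last entry of a
  chain equals M+1 gives C(j+1, M+1) = C(j+1, M) + lam (M+1-j) * mu (M+1-j) * C(j, M+1).  These two
  recursions are compatible, so F(2j + d, d) = lam 1 * ... * lam d * C(j, j + d) follows by
  induction on the length of the paths.\<close>

lemma path_ok_append: "path_ok h (s @ t) e \<longleftrightarrow> (\<exists>m. path_ok h s m \<and> path_ok m t e)"
proof (induction s arbitrary: h)
  case (Cons b s)
  then show ?case by (cases b) auto
qed simp

lemma pwt_append:
  "path_ok h s m \<Longrightarrow> pwt lam mu h (s @ t) = pwt lam mu h s * pwt lam mu m t"
proof (induction s arbitrary: h)
  case (Cons b s)
  then show ?case by (cases b) (auto simp: mult.assoc)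
qed simp

lemma path_ok_snoc_True: "path_ok h (s @ [True]) e \<longleftrightarrow> 0 < e \<and> path_ok h s (e - 1)"
  by (auto simp: path_ok_append)

lemma path_ok_snoc_False: "path_ok h (s @ [False]) e \<longleftrightarrow> path_ok h s (Suc e)"
  by (auto simp: path_ok_append)

lemma path_ok_height_bound: "path_ok h s e \<Longrightarrow> e \<le> h + length s"
proof (induction s arbitrary: h)
  case (Cons b s)
  then show ?case by (cases b) fastforce+
qed simp

lemma finite_Dpaths: "finite (Dpaths k h d)"
proof -
  have "Dpaths k h d \<subseteq> {s. set s \<subseteq> UNIV \<and> length s = k}"
    unfolding Dpaths_def by auto
  moreover have "finite {s :: bool list. set s \<subseteq> UNIV \<and> length s = k}"
    by (rule finite_lists_length_eq) simp
  ultimately show ?thesis by (rule finite_subset)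
qed

lemma Dpaths_Suc:
  "Dpaths (Suc k) h d =
     (if 0 < d then (\<lambda>s. s @ [True]) ` Dpaths k h (d - 1) else {})
     \<union> (\<lambda>s. s @ [False]) ` Dpaths k h (Suc d)"
proof (intro equalityI subsetI)
  fix s assume "s \<in> Dpaths (Suc k) h d"
  then have len: "length s = Suc k" and ok: "path_ok h s d"
    unfolding Dpaths_def by auto
  obtain s' b where s: "s = s' @ [b]"
    using len by (metis length_Suc_conv_rev)
  show "s \<in> (if 0 < d then (\<lambda>s. s @ [True]) ` Dpaths k h (d - 1) else {})
              \<union> (\<lambda>s. s @ [False]) ` Dpaths k h (Suc d)"
    using len ok unfolding s Dpaths_def
    by (cases b) (auto simp: path_ok_snoc_True path_ok_snoc_False)
qed (auto simp: Dpaths_def path_ok_snoc_True path_ok_snoc_False split: if_splits)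

definition path_weight_sum ::
    "(nat \<Rightarrow> 'a::comm_ring_1) \<Rightarrow> (nat \<Rightarrow> 'a) \<Rightarrow> nat \<Rightarrow> nat \<Rightarrow> nat \<Rightarrow> 'a" where
  "path_weight_sum lam mu k h d = (\<Sum>P\<in>Dpaths k h d. pwt lam mu h P)"

lemma path_weight_sum_0: "path_weight_sum lam mu 0 h d = (if h = d then 1 else 0)"
proof -
  have "Dpaths 0 h d = (if h = d then {[]} else {})"
    unfolding Dpaths_def by auto
  then show ?thesis by (simp add: path_weight_sum_def)
qed

lemma path_weight_sum_eq_0:
  assumes "h + k < d"
  shows "path_weight_sum lam mu k h d = 0"
proof -
  have "Dpaths k h d = {}"
    using assms path_ok_height_bound unfolding Dpaths_def by fastforce
  then show ?thesis by (simp add: path_weight_sum_def)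
qed

lemma path_weight_sum_Suc:
  "path_weight_sum lam mu (Suc k) h d =
     (if 0 < d then path_weight_sum lam mu k h (d - 1) * lam d else 0)
     + path_weight_sum lam mu k h (Suc d) * mu (Suc d)"
proof -
  let ?w = "pwt lam mu h"
  have up: "(\<Sum>P\<in>(\<lambda>s. s @ [True]) ` Dpaths k h (d - 1). ?w P)
              = path_weight_sum lam mu k h (d - 1) * lam d" if "0 < d"
    using that unfolding path_weight_sum_def
    by (subst sum.reindex) (auto simp: inj_on_def sum_distrib_right Dpaths_def pwt_append
                                 intro!: sum.cong)
  have down: "(\<Sum>P\<in>(\<lambda>s. s @ [False]) ` Dpaths k h (Suc d). ?w P)
                = path_weight_sum lam mu k h (Suc d) * mu (Suc d)"
    unfolding path_weight_sum_def
    by (subst sum.reindex) (auto simp: inj_on_def sum_distrib_right Dpaths_def pwt_append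
                                 intro!: sum.cong)
  have "path_weight_sum lam mu (Suc k) h d =
          (\<Sum>P\<in>(if 0 < d then (\<lambda>s. s @ [True]) ` Dpaths k h (d - 1) else {}). ?w P)
          + (\<Sum>P\<in>(\<lambda>s. s @ [False]) ` Dpaths k h (Suc d). ?w P)"
    unfolding path_weight_sum_def Dpaths_Suc
    by (rule sum.union_disjoint) (auto simp: finite_Dpaths)
  then show ?thesis using up down by simp
qed

definition bounded_chains :: "nat \<Rightarrow> nat \<Rightarrow> nat list set" where
  "bounded_chains j M = {ms. length ms = j \<and> sorted ms
                            \<and> (\<forall>i<length ms. i + 1 \<le> ms ! i \<and> ms ! i \<le> M)}"

definition chain_weight_sum :: "(nat \<Rightarrow> 'a::comm_ring_1) \<Rightarrow> (nat \<Rightarrow> 'a) \<Rightarrow> nat \<Rightarrow> nat \<Rightarrow> 'a" where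
  "chain_weight_sum lam mu j M =
     (\<Sum>ms\<in>bounded_chains j M. \<Prod>i<j. lam (ms ! i - i) * mu (ms ! i - i))"

lemma finite_bounded_chains: "finite (bounded_chains j M)"
proof -
  have "bounded_chains j M \<subseteq> {ms. set ms \<subseteq> {0..M} \<and> length ms = j}"
    unfolding bounded_chains_def by (auto simp: in_set_conv_nth)
  then show ?thesis by (rule finite_subset) (simp add: finite_lists_length_eq)
qed

lemma bounded_chains_0: "bounded_chains 0 M = {[]}"
  unfolding bounded_chains_def by auto

lemma bounded_chains_Suc_self: "bounded_chains (Suc j) j = {}"
  unfolding bounded_chains_def by (auto dest!: spec[of _ j])

lemma bounded_chains_Suc_Suc:
  assumes "j \<le> M"
  shows "bounded_chains (Suc j) (Suc M)
           = bounded_chains (Suc j) M \<union> (\<lambda>ms. ms @ [Suc M]) ` bounded_chains j (Suc M)"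
proof (intro equalityI subsetI)
  fix ms assume "ms \<in> bounded_chains (Suc j) (Suc M)"
  then have len: "length ms = Suc j" and sorted: "sorted ms"
    and bounds: "\<forall>i<length ms. i + 1 \<le> ms ! i \<and> ms ! i \<le> Suc M"
    unfolding bounded_chains_def by auto
  obtain xs x where ms: "ms = xs @ [x]"
    using len by (metis length_Suc_conv_rev)
  have len_xs: "length xs = j"
    using len ms by simp
  have xs_le: "\<forall>i<length xs. xs ! i \<le> x"
    using sorted unfolding ms by (auto simp: sorted_append)
  have xs_bounds: "i + 1 \<le> xs ! i \<and> xs ! i \<le> Suc M" if "i < length xs" for i
    using bounds that unfolding ms by (auto simp: nth_append dest!: spec[of _ i])
  have "j + 1 \<le> x" "x \<le> Suc M"
    using bounds len len_xs unfolding ms by (auto dest!: spec[of _ j])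
  then consider "x = Suc M" | "x \<le> M" by linarith
  then show "ms \<in> bounded_chains (Suc j) M \<union> (\<lambda>ms. ms @ [Suc M]) ` bounded_chains j (Suc M)"
  proof cases
    case 1
    have "xs \<in> bounded_chains j (Suc M)"
      using len_xs sorted xs_bounds unfolding ms bounded_chains_def
      by (auto simp: sorted_append)
    then show ?thesis using 1 ms by auto
  next
    case 2
    have "ms \<in> bounded_chains (Suc j) M"
      using len sorted xs_le xs_bounds \<open>j + 1 \<le> x\<close> 2 len_xs unfolding ms bounded_chains_def
      by (auto simp: nth_append less_Suc_eq)
    then show ?thesis by auto
  qed
next
  fix ms
  assume "ms \<in> bounded_chains (Suc j) M \<union> (\<lambda>ms. ms @ [Suc M]) ` bounded_chains j (Suc M)"
  then show "ms \<in> bounded_chains (Suc j) (Suc M)"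
  proof
    assume "ms \<in> bounded_chains (Suc j) M"
    then show ?thesis unfolding bounded_chains_def by force
  next
    assume "ms \<in> (\<lambda>ms. ms @ [Suc M]) ` bounded_chains j (Suc M)"
    then obtain xs where ms: "ms = xs @ [Suc M]" and len: "length xs = j" and "sorted xs"
      and bounds: "\<forall>i<length xs. i + 1 \<le> xs ! i \<and> xs ! i \<le> Suc M"
      unfolding bounded_chains_def by auto
    moreover have "\<forall>y\<in>set xs. y \<le> Suc M"
      using bounds by (auto simp: in_set_conv_nth)
    ultimately show ?thesis
      using assms unfolding bounded_chains_def by (auto simp: sorted_append nth_append less_Suc_eq)
  qed
qed

lemma chain_weight_sum_0: "chain_weight_sum lam mu 0 M = 1"
  by (simp add: chain_weight_sum_def bounded_chains_0)

lemma chain_weight_sum_Suc_self: "chain_weight_sum lam mu (Suc j) j = 0"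
  by (simp add: chain_weight_sum_def bounded_chains_Suc_self)

lemma chain_weight_sum_Suc_Suc:
  assumes "j \<le> M"
  shows "chain_weight_sum lam mu (Suc j) (Suc M)
           = chain_weight_sum lam mu (Suc j) M
             + lam (Suc M - j) * mu (Suc M - j) * chain_weight_sum lam mu j (Suc M)"
proof -
  let ?w = "\<lambda>j ms. \<Prod>i<j. lam (ms ! i - i) * mu (ms ! i - i)"
  let ?snoc = "\<lambda>ms. ms @ [Suc M]"
  have disjoint: "bounded_chains (Suc j) M \<inter> ?snoc ` bounded_chains j (Suc M) = {}"
    unfolding bounded_chains_def by (auto dest!: spec[of _ j])
  have snoc_weight: "?w (Suc j) (?snoc ms) = lam (Suc M - j) * mu (Suc M - j) * ?w j ms"
    if "ms \<in> bounded_chains j (Suc M)" for ms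
  proof -
    have len: "length ms = j"
      using that unfolding bounded_chains_def by auto
    have "?w j (?snoc ms) = ?w j ms"
      by (rule prod.cong) (auto simp: nth_append len)
    then show ?thesis by (simp add: len nth_append mult.commute)
  qed
  have "chain_weight_sum lam mu (Suc j) (Suc M)
          = chain_weight_sum lam mu (Suc j) M + (\<Sum>ms\<in>?snoc ` bounded_chains j (Suc M). ?w (Suc j) ms)"
    unfolding chain_weight_sum_def bounded_chains_Suc_Suc[OF assms]
    by (rule sum.union_disjoint) (auto simp: finite_bounded_chains disjoint)
  also have "(\<Sum>ms\<in>?snoc ` bounded_chains j (Suc M). ?w (Suc j) ms)
               = (\<Sum>ms\<in>bounded_chains j (Suc M). lam (Suc M - j) * mu (Suc M - j) * ?w j ms)"
  proof (rule sum.reindex_cong[where l = ?snoc])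
    show "inj_on ?snoc (bounded_chains j (Suc M))" by (simp add: inj_on_def)
  qed (rule refl, rule snoc_weight)
  finally show ?thesis
    by (simp add: chain_weight_sum_def sum_distrib_left)
qed

lemma path_weight_sum_eq_chain_weight_sum:
  "k = 2 * j + d \<Longrightarrow>
     path_weight_sum lam mu k 0 d = (\<Prod>i=1..d. lam i) * chain_weight_sum lam mu j (j + d)"
proof (induction k arbitrary: j d)
  case 0
  then show ?case by (simp add: path_weight_sum_0 chain_weight_sum_0)
next
  case (Suc k)
  consider (flat) j' where "d = 0" "j = Suc j'"
    | (top) d' where "d = Suc d'" "j = 0"
    | (inner) d' j' where "d = Suc d'" "j = Suc j'"
    using Suc.prems by (cases d; cases j) auto
  then show ?case
  proof cases
    case flat
    then have "path_weight_sum lam mu k 0 1 = lam 1 * chain_weight_sum lam mu j' (Suc j')"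
      using Suc.IH[of j' 1] Suc.prems by simp
    then show ?thesis
      using flat
      by (simp add: path_weight_sum_Suc chain_weight_sum_Suc_Suc chain_weight_sum_Suc_self
                    mult.commute)
  next
    case top
    then have "path_weight_sum lam mu k 0 d' = (\<Prod>i=1..d'. lam i)"
      using Suc.IH[of 0 d'] Suc.prems by (simp add: chain_weight_sum_0)
    moreover have "path_weight_sum lam mu k 0 (Suc d) = 0"
      using Suc.prems top by (simp add: path_weight_sum_eq_0)
    ultimately show ?thesis
      using top by (simp add: path_weight_sum_Suc chain_weight_sum_0)
  next
    case inner
    have "path_weight_sum lam mu k 0 d' = (\<Prod>i=1..d'. lam i) * chain_weight_sum lam mu j (j + d')"
      using Suc.IH[of j d'] Suc.prems inner by simp
    moreover have "path_weight_sum lam mu k 0 (Suc d)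
                     = (\<Prod>i=1..Suc d. lam i) * chain_weight_sum lam mu j' (j' + Suc d)"
      using Suc.IH[of j' "Suc d"] Suc.prems inner by simp
    ultimately show ?thesis
      using inner by (simp add: path_weight_sum_Suc chain_weight_sum_Suc_Suc algebra_simps)
  qed
qed

theorem mainTheorem5:
  fixes lam mu :: "nat \<Rightarrow> 'a::comm_ring_1" and k \<delta> :: nat
  assumes "\<delta> \<le> k" and "even (k - \<delta>)"
  shows "(\<Sum>P\<in>Dpaths k 0 \<delta>. pwt lam mu 0 P) =
    (\<Prod>i=1..\<delta>. lam i) *
    (\<Sum>ms\<in>{ms :: nat list. length ms = (k - \<delta>) div 2 \<and> sorted ms
                 \<and> (\<forall>i<length ms. i + 1 \<le> ms ! i \<and> ms ! i \<le> (k + \<delta>) div 2)}.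
       \<Prod>i<(k - \<delta>) div 2. lam (ms ! i - i) * mu (ms ! i - i))"
proof -
  define j where "j = (k - \<delta>) div 2"
  have k: "k = 2 * j + \<delta>" and M: "(k + \<delta>) div 2 = j + \<delta>"
    using assms unfolding j_def by auto
  have "path_weight_sum lam mu k 0 \<delta> = (\<Prod>i=1..\<delta>. lam i) * chain_weight_sum lam mu j (j + \<delta>)"
    by (rule path_weight_sum_eq_chain_weight_sum[OF k])
  then show ?thesis
    unfolding path_weight_sum_def chain_weight_sum_def bounded_chains_def M j_def .
qed

end
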